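(* If $A$ is an $m$-dimensional permutation array of size $n_1\times\cdots\times n_m$ and odd order $n$, then there is an $n_1\times\cdots\times n_m$ window in the periodic extension of $A$ which has a repeated difference vector. In particular, no $m$-dimensional Costas array of odd order is periodic Costas.
   Context: For $n\in\mathbb{N}$, $[n]=\{1,\dots,n\}$; $m\ge2$, all $n_i\ge2$. A binary array $A:[n_1]\times\cdots\times[n_m]\to\{0,1\}$ is an $m$-dimensional permutation array if there exist $k$ with $1\le k<m$ and a bijection $\varphi:[n_1]\times\cdots\times[n_k]\to[n_{k+1}]\times\cdots\times[n_m]$ with $A(a_1,\dots,a_m)=1$ iff $\varphi(a_1,\dots,a_k)=(a_{k+1},\dots,a_m)$; points with value 1 are dots; order $n=n_1\cdots n_k$. The periodic extension $\mathbb{A}:\mathbb{Z}^m\to\{0,1\}$ is $\mathbb{A}(a_1,\dots,a_m)=A(a_1',\dots,a_m')$ with $a_i'\in[n_i]$, $a_i'\equiv a_i\pmod{n_i}$; an $n_1\times\cdots\times n_m$ window is the restriction of $\mathbb{A}$ to a box $\prod_i\{k_i,\dots,k_i+n_i-1\}$. The difference vector from dot $(a_i)$ to distinct dot $(w_i)$ is $\langle w_i-a_i\rangle_i$; a window has a repeated difference vector if two distinct ordered pairs of distinct dots in it have equal difference vectors. An $m$-dimensional Costas array is a permutation array with no repeated difference vector; it is periodic Costas if every $n_1\times\cdots\times n_m$ window of its periodic extension has no repeated difference vector. *)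

theory Defs
  imports Main
begin

text \<open>Points of Z^m are int lists of length m; coordinates are 1-based as in the paper.
  A size is a list ns = [n_1,...,n_m].\<close>

definition box :: "nat list \<Rightarrow> int list set" where
  "box ns = {a. length a = length ns \<and>
                (\<forall>i<length ns. 1 \<le> a ! i \<and> a ! i \<le> int (ns ! i))}"

definition perm_array_split :: "nat list \<Rightarrow> (int list \<Rightarrow> nat) \<Rightarrow> nat \<Rightarrow> bool" where
  "perm_array_split ns A k \<longleftrightarrow>
     1 \<le> k \<and> k < length ns \<and>
     (\<forall>a\<in>box ns. A a \<in> {0, 1}) \<and>
     (\<exists>\<phi>. bij_betw \<phi> (box (take k ns)) (box (drop k ns)) \<and>
           (\<forall>a\<in>box ns. A a = 1 \<longleftrightarrow> \<phi> (take k a) = drop k a))"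

definition perm_array :: "nat list \<Rightarrow> (int list \<Rightarrow> nat) \<Rightarrow> bool" where
  "perm_array ns A \<longleftrightarrow> (\<exists>k. perm_array_split ns A k)"

definition order_of_split :: "nat list \<Rightarrow> nat \<Rightarrow> nat" where
  "order_of_split ns k = prod_list (take k ns)"

definition per_ext :: "nat list \<Rightarrow> (int list \<Rightarrow> nat) \<Rightarrow> int list \<Rightarrow> nat" where
  "per_ext ns A a = A (map (\<lambda>(x, n). (x - 1) mod int n + 1) (zip a ns))"

definition window :: "nat list \<Rightarrow> int list \<Rightarrow> int list set" where
  "window ns c = {a. length a = length ns \<and>
                    (\<forall>i<length ns. c ! i \<le> a ! i \<and> a ! i \<le> c ! i + int (ns ! i) - 1)}"

definition diff_vec :: "int list \<Rightarrow> int list \<Rightarrow> int list" where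
  "diff_vec a w = map2 (\<lambda>wi ai. wi - ai) w a"

definition has_repeated_diff :: "int list set \<Rightarrow> bool" where
  "has_repeated_diff D \<longleftrightarrow>
     (\<exists>a w a' w'. a \<in> D \<and> w \<in> D \<and> a' \<in> D \<and> w' \<in> D \<and> a \<noteq> w \<and> a' \<noteq> w' \<and>
        (a, w) \<noteq> (a', w') \<and> diff_vec a w = diff_vec a' w')"

definition window_has_repeated_diff :: "nat list \<Rightarrow> (int list \<Rightarrow> nat) \<Rightarrow> int list \<Rightarrow> bool" where
  "window_has_repeated_diff ns A c \<longleftrightarrow>
     has_repeated_diff {a \<in> window ns c. per_ext ns A a = 1}"

definition costas :: "nat list \<Rightarrow> (int list \<Rightarrow> nat) \<Rightarrow> bool" where
  "costas ns A \<longleftrightarrow> perm_array ns A \<and> \<not> has_repeated_diff {a \<in> box ns. A a = 1}"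

definition periodic_costas :: "nat list \<Rightarrow> (int list \<Rightarrow> nat) \<Rightarrow> bool" where
  "periodic_costas ns A \<longleftrightarrow> costas ns A \<and>
     (\<forall>c. length c = length ns \<longrightarrow> \<not> window_has_repeated_diff ns A c)"

end

theory Submission
  imports Defs
begin

(* Write the dots as x @ phi x with x in T = [n_1] x ... x [n_k], and let sigma increase the
   first coordinate of x cyclically by one.  Since phi is injective and sigma has no fixed point,
   phi (sigma x) - phi x is a nonzero element of the torus Z/n_(k+1) x ... x Z/n_m, which has as
   many elements as T.  By pigeonhole two distinct x, x' give the same element, so the dot pairs
   (x, sigma x) and (x', sigma x') have difference vectors that agree modulo every n_i.

   As |T| = |S|, the product of all n_i is the square of the order, so every n_i is odd.  For an
   odd modulus n, congruent differences q - p and q' - p' become equal inside some interval of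
   length n: after possibly swapping p with q, p' with q', and the two pairs, the residues of
   q - p and p' - p are both below n/2, and the interval starting at p works.  Choosing such an
   interval in every coordinate gives a window with a repeated difference vector. *)

lemma box_Nil: "box [] = {[]}"
  by (auto simp: box_def)

lemma box_Cons: "box (n # ns) = (\<lambda>(x, a). x # a) ` ({1..int n} \<times> box ns)"
proof (intro set_eqI iffI)
  fix v assume v: "v \<in> box (n # ns)"
  then obtain x a where v_eq: "v = x # a"
    unfolding box_def by (cases v) auto
  have "x \<in> {1..int n}" using v v_eq unfolding box_def by (auto dest: spec[of _ 0])
  moreover have "a \<in> box ns" using v v_eq unfolding box_def by (auto dest: spec[of _ "Suc _"])
  ultimately show "v \<in> (\<lambda>(x, a). x # a) ` ({1..int n} \<times> box ns)" using v_eq by auto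
next
  fix v assume "v \<in> (\<lambda>(x, a). x # a) ` ({1..int n} \<times> box ns)"
  then show "v \<in> box (n # ns)" unfolding box_def by (auto simp: less_Suc_eq_0_disj)
qed

lemma finite_box: "finite (box ns)"
  by (induction ns) (simp_all add: box_Nil box_Cons)

lemma card_box: "card (box ns) = prod_list ns"
proof (induction ns)
  case (Cons n ns)
  have "inj_on (\<lambda>(x, a). x # a) ({1..int n} \<times> box ns)"
    by (auto simp: inj_on_def)
  then show ?case
    using Cons by (simp add: box_Cons card_image card_cartesian_product)
qed (simp add: box_Nil)

lemma length_box: "a \<in> box ns \<Longrightarrow> length a = length ns"
  by (simp add: box_def)

lemma append_in_box: "a \<in> box ns \<Longrightarrow> b \<in> box ns' \<Longrightarrow> a @ b \<in> box (ns @ ns')"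
  by (auto simp: box_def nth_append)

text \<open>box ns serves as the torus Z/n_1 x ... x Z/n_m, and box_rep ns as the quotient map onto it.\<close>
definition box_rep :: "nat list \<Rightarrow> int list \<Rightarrow> int list" where
  "box_rep ns a = map (\<lambda>(x, n). (x - 1) mod int n + 1) (zip a ns)"

lemma per_ext_eq_box_rep: "per_ext ns A a = A (box_rep ns a)"
  by (simp add: per_ext_def box_rep_def)

lemma length_box_rep [simp]: "length (box_rep ns a) = min (length a) (length ns)"
  by (simp add: box_rep_def)

lemma nth_box_rep:
  "i < length a \<Longrightarrow> i < length ns \<Longrightarrow> box_rep ns a ! i = (a ! i - 1) mod int (ns ! i) + 1"
  by (simp add: box_rep_def)

lemma box_rep_in_box:
  assumes "length a = length ns" and "\<forall>i<length ns. 0 < ns ! i"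
  shows "box_rep ns a \<in> box ns"
proof -
  have "(a ! i - 1) mod int (ns ! i) < int (ns ! i)" if "i < length ns" for i
    using assms(2) that by simp
  then show ?thesis
    using assms by (auto simp: box_def nth_box_rep add1_zle_eq)
qed

lemma box_rep_box: "a \<in> box ns \<Longrightarrow> box_rep ns a = a"
  by (auto simp: box_def box_rep_def intro!: nth_equalityI)

lemma box_rep_eq_iff:
  assumes "length a = length ns" and "length b = length ns"
  shows "box_rep ns a = box_rep ns b \<longleftrightarrow>
    (\<forall>i<length ns. a ! i mod int (ns ! i) = b ! i mod int (ns ! i))"
proof -
  have "(a ! i - 1) mod int (ns ! i) = (b ! i - 1) mod int (ns ! i) \<longleftrightarrow>
        a ! i mod int (ns ! i) = b ! i mod int (ns ! i)" for i
    by (simp add: mod_eq_dvd_iff)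
  then show ?thesis
    using assms by (auto simp: list_eq_iff_nth_eq nth_box_rep)
qed

lemma box_eq_if_mod_eq:
  assumes "a \<in> box ns" and "b \<in> box ns"
    and "\<forall>i<length ns. a ! i mod int (ns ! i) = b ! i mod int (ns ! i)"
  shows "a = b"
  using assms box_rep_eq_iff[of a ns b] by (simp add: length_box box_rep_box)

lemma box_rep_append:
  "length a = length ns \<Longrightarrow> box_rep (ns @ ns') (a @ b) = box_rep ns a @ box_rep ns' b"
  by (simp add: box_rep_def)

lemma diff_vec_append:
  "length a = length b \<Longrightarrow> diff_vec (a @ c) (b @ d) = diff_vec a b @ diff_vec c d"
  by (simp add: diff_vec_def)

lemma length_diff_vec [simp]: "length (diff_vec a b) = min (length a) (length b)"
  by (simp add: diff_vec_def)

lemma box_rep_diff_vec_box_rep: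
  assumes "length a = length ns" and "length b = length ns"
  shows "box_rep ns (diff_vec a (box_rep ns b)) = box_rep ns (diff_vec a b)"
proof -
  have "((b ! i - 1) mod n + 1 - a ! i) mod n = (b ! i - a ! i) mod n" for i and n :: int
    by (metis diff_add_cancel diff_diff_eq2 mod_diff_left_eq)
  then show ?thesis
    using assms by (subst box_rep_eq_iff) (auto simp: diff_vec_def nth_box_rep)
qed

lemma box_rep_diff_vec_eq_zero_iff:
  assumes "a \<in> box ns" and "b \<in> box ns"
  shows "box_rep ns (diff_vec a b) = box_rep ns (replicate (length ns) 0) \<longleftrightarrow> a = b"
proof
  assume "box_rep ns (diff_vec a b) = box_rep ns (replicate (length ns) 0)"
  then have "(b ! i - a ! i) mod int (ns ! i) = 0" if "i < length ns" for i
    using assms that by (subst (asm) box_rep_eq_iff) (auto simp: length_box diff_vec_def)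
  then have "\<forall>i<length ns. a ! i mod int (ns ! i) = b ! i mod int (ns ! i)"
    by (metis mod_eq_dvd_iff dvd_eq_mod_eq_0)
  then show "a = b"
    using box_eq_if_mod_eq[OF assms] by blast
next
  assume "a = b"
  then show "box_rep ns (diff_vec a b) = box_rep ns (replicate (length ns) 0)"
    using assms(1) by (subst box_rep_eq_iff) (auto simp: length_box diff_vec_def)
qed

definition box_shift :: "nat list \<Rightarrow> nat \<Rightarrow> int list \<Rightarrow> int list" where
  "box_shift ns i x = box_rep ns (x[i := x ! i + 1])"

lemma box_shift_in_box:
  "x \<in> box ns \<Longrightarrow> \<forall>j<length ns. 0 < ns ! j \<Longrightarrow> box_shift ns i x \<in> box ns"
  by (simp add: box_shift_def box_rep_in_box length_box)

lemma box_shift_neq: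
  assumes "x \<in> box ns" and "i < length ns" and "2 \<le> ns ! i"
  shows "box_shift ns i x \<noteq> x"
proof
  assume "box_shift ns i x = x"
  then have "box_rep ns (x[i := x ! i + 1]) = box_rep ns x"
    using assms(1) by (simp add: box_shift_def box_rep_box)
  then have "(x ! i + 1) mod int (ns ! i) = x ! i mod int (ns ! i)"
    using assms(1,2) by (subst (asm) box_rep_eq_iff) (auto simp: length_box dest: spec[of _ i])
  then have "int (ns ! i) dvd 1"
    by (simp add: mod_eq_dvd_iff)
  then show False
    using assms(3) by simp
qed

lemma box_rep_diff_vec_box_shift:
  assumes "x \<in> box ns" and "i < length ns"
  shows "box_rep ns (diff_vec x (box_shift ns i x)) = box_rep ns ((replicate (length ns) 0)[i := 1])"
proof -
  have "diff_vec x (x[i := x ! i + 1]) = (replicate (length ns) 0)[i := 1]"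
    using assms by (auto simp: diff_vec_def length_box list_eq_iff_nth_eq nth_list_update)
  then show ?thesis
    using assms by (simp add: box_shift_def box_rep_diff_vec_box_rep length_box)
qed

definition interval_rep :: "int \<Rightarrow> int \<Rightarrow> int \<Rightarrow> int" where
  "interval_rep n c y = c + (y - c) mod n"

lemma interval_rep_mod: "interval_rep n c y mod n = y mod n"
  by (simp add: interval_rep_def mod_simps)

lemma interval_rep_bounds: "0 < n \<Longrightarrow> c \<le> interval_rep n c y \<and> interval_rep n c y \<le> c + n - 1"
  using pos_mod_bound[of n "y - c"] by (simp add: interval_rep_def)

lemma interval_rep_diff: "interval_rep n c q - interval_rep n c p = (q - c) mod n - (p - c) mod n"
  by (simp add: interval_rep_def)

lemma interval_rep_diff_start:
  fixes n p q p' q' :: int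
  assumes "0 < n" and cong: "(q - p) mod n = (q' - p') mod n"
    and "2 * ((q - p) mod n) < n" and "2 * ((p' - p) mod n) < n"
  shows "interval_rep n p q - interval_rep n p p = interval_rep n p q' - interval_rep n p p'"
proof -
  define d where "d = (q - p) mod n"
  define t where "t = (p' - p) mod n"
  have "(q' - p) mod n = (d + t) mod n"
    unfolding d_def t_def cong by (simp add: mod_simps)
  also have "\<dots> = d + t"
    using assms by (simp add: d_def t_def)
  finally show ?thesis
    by (simp add: interval_rep_diff d_def t_def)
qed

lemma interval_rep_diff_small:
  fixes n p q p' q' :: int
  assumes "0 < n" "odd n" and cong: "(q - p) mod n = (q' - p') mod n"
    and small: "2 * ((q - p) mod n) < n"
  shows "\<exists>c. interval_rep n c q - interval_rep n c p = interval_rep n c q' - interval_rep n c p'"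
proof (cases "2 * ((p' - p) mod n) < n")
  case True
  then show ?thesis
    using interval_rep_diff_start[OF assms(1) cong small] by blast
next
  case False
  moreover have "2 * ((p' - p) mod n) \<noteq> n"
    using \<open>odd n\<close> by (metis dvd_triv_left)
  ultimately have "(p' - p) mod n \<noteq> 0" and "2 * ((p' - p) mod n) > n"
    using assms(1) by auto
  then have "2 * ((p - p') mod n) < n"
    using zmod_zminus1_eq_if[of "p' - p" n] by simp
  moreover have "2 * ((q' - p') mod n) < n"
    using small cong by simp
  ultimately have
    "interval_rep n p' q' - interval_rep n p' p' = interval_rep n p' q - interval_rep n p' p"
    using interval_rep_diff_start[OF assms(1) cong[symmetric]] by blast
  then show ?thesis
    by (intro exI[of _ p']) simp
qed

text \<open>Oddness is needed: for n = 2, p = 0, q = 1, p' = 1, q' = 2 no window works.\<close>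
lemma interval_rep_diff_odd:
  fixes n p q p' q' :: int
  assumes "0 < n" "odd n" and cong: "(q - p) mod n = (q' - p') mod n"
  shows "\<exists>c. interval_rep n c q - interval_rep n c p = interval_rep n c q' - interval_rep n c p'"
proof (cases "2 * ((q - p) mod n) < n")
  case True
  then show ?thesis using interval_rep_diff_small[OF assms] by blast
next
  case False
  moreover have "2 * ((q - p) mod n) \<noteq> n"
    using \<open>odd n\<close> by (metis dvd_triv_left)
  ultimately have "(q - p) mod n \<noteq> 0" and "2 * ((q - p) mod n) > n"
    using assms(1) by auto
  then have "2 * ((p - q) mod n) < n"
    using zmod_zminus1_eq_if[of "q - p" n] by simp
  moreover have "(p - q) mod n = (p' - q') mod n"
    using cong by (metis minus_diff_eq mod_minus_eq)
  ultimately obtain c where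
    "interval_rep n c p - interval_rep n c q = interval_rep n c p' - interval_rep n c q'"
    using interval_rep_diff_small[OF assms(1,2)] by blast
  then show ?thesis by (intro exI[of _ c]) linarith
qed

definition window_rep :: "nat list \<Rightarrow> int list \<Rightarrow> int list \<Rightarrow> int list" where
  "window_rep ns c y = map (\<lambda>i. interval_rep (int (ns ! i)) (c ! i) (y ! i)) [0..<length ns]"

lemma window_rep_in_window:
  assumes "length c = length ns" and "\<forall>i<length ns. 0 < ns ! i"
  shows "window_rep ns c y \<in> window ns c"
  using assms interval_rep_bounds by (simp add: window_def window_rep_def)

lemma box_rep_window_rep:
  "length y = length ns \<Longrightarrow> box_rep ns (window_rep ns c y) = box_rep ns y"
  by (subst box_rep_eq_iff) (simp_all add: window_rep_def interval_rep_mod)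

lemma diff_vec_window_rep:
  "diff_vec (window_rep ns c a) (window_rep ns c b) =
     map (\<lambda>i. interval_rep (int (ns ! i)) (c ! i) (b ! i) - interval_rep (int (ns ! i)) (c ! i) (a ! i))
       [0..<length ns]"
  by (simp add: diff_vec_def window_rep_def zip_map_map zip_same_conv_map)

definition has_repeated_diff_mod :: "nat list \<Rightarrow> int list set \<Rightarrow> bool" where
  "has_repeated_diff_mod ns D \<longleftrightarrow>
     (\<exists>a w a' w'. a \<in> D \<and> w \<in> D \<and> a' \<in> D \<and> w' \<in> D \<and> a \<noteq> w \<and> a' \<noteq> w' \<and>
        (a, w) \<noteq> (a', w') \<and> box_rep ns (diff_vec a w) = box_rep ns (diff_vec a' w'))"

lemma window_rep_diff_odd:
  assumes odd: "\<forall>i<length ns. odd (ns ! i)"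
    and cong: "\<forall>i<length ns. (w ! i - a ! i) mod int (ns ! i) = (w' ! i - a' ! i) mod int (ns ! i)"
  shows "\<exists>c. length c = length ns \<and>
    diff_vec (window_rep ns c a) (window_rep ns c w) = diff_vec (window_rep ns c a') (window_rep ns c w')"
proof -
  let ?agree = "\<lambda>i c. interval_rep (int (ns ! i)) c (w ! i) - interval_rep (int (ns ! i)) c (a ! i) =
    interval_rep (int (ns ! i)) c (w' ! i) - interval_rep (int (ns ! i)) c (a' ! i)"
  have "\<exists>c. i < length ns \<longrightarrow> ?agree i c" for i
  proof (cases "i < length ns")
    case True
    then have "0 < int (ns ! i)" "odd (int (ns ! i))"
      using odd odd_pos by auto
    then show ?thesis
      using interval_rep_diff_odd cong True by blast
  qed simp
  then have "\<forall>i. \<exists>c. i < length ns \<longrightarrow> ?agree i c"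
    by blast
  then obtain f where "\<forall>i. i < length ns \<longrightarrow> ?agree i (f i)"
    by (rule choice[THEN exE])
  then show ?thesis
    by (intro exI[of _ "map f [0..<length ns]"]) (simp add: diff_vec_window_rep)
qed

lemma window_has_repeated_diff_if_mod:
  assumes odd: "\<forall>i<length ns. odd (ns ! i)"
    and "has_repeated_diff_mod ns {a \<in> box ns. A a = 1}"
  shows "\<exists>c. length c = length ns \<and> window_has_repeated_diff ns A c"
proof -
  let ?D = "{a \<in> box ns. A a = 1}"
  obtain a w a' w' where dots: "a \<in> ?D" "w \<in> ?D" "a' \<in> ?D" "w' \<in> ?D"
    and distinct: "a \<noteq> w" "a' \<noteq> w'" "(a, w) \<noteq> (a', w')"
    and rep: "box_rep ns (diff_vec a w) = box_rep ns (diff_vec a' w')"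
    using assms(2) unfolding has_repeated_diff_mod_def by blast
  have "\<forall>i<length ns. (w ! i - a ! i) mod int (ns ! i) = (w' ! i - a' ! i) mod int (ns ! i)"
    using rep dots by (subst (asm) box_rep_eq_iff) (auto simp: length_box diff_vec_def)
  then obtain c where c_len: "length c = length ns" and diff_eq:
    "diff_vec (window_rep ns c a) (window_rep ns c w) = diff_vec (window_rep ns c a') (window_rep ns c w')"
    using window_rep_diff_odd[OF odd] by blast
  have pos: "\<forall>i<length ns. 0 < ns ! i"
    using odd by (metis odd_pos)
  let ?W = "{v \<in> window ns c. per_ext ns A v = 1}"
  have in_W: "window_rep ns c v \<in> ?W" if "v \<in> ?D" for v
    using that window_rep_in_window[OF c_len pos]
    by (simp add: per_ext_eq_box_rep box_rep_window_rep length_box box_rep_box)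
  have inj: "inj_on (window_rep ns c) ?D"
  proof
    fix v v' assume "v \<in> ?D" "v' \<in> ?D" "window_rep ns c v = window_rep ns c v'"
    then show "v = v'"
      using box_rep_window_rep[of v ns c] box_rep_window_rep[of v' ns c]
      by (metis (no_types, lifting) box_rep_box length_box mem_Collect_eq)
  qed
  have "window_rep ns c a \<noteq> window_rep ns c w" "window_rep ns c a' \<noteq> window_rep ns c w'"
    "(window_rep ns c a, window_rep ns c w) \<noteq> (window_rep ns c a', window_rep ns c w')"
    using inj dots distinct by (auto simp: inj_on_eq_iff)
  then have "has_repeated_diff ?W"
    unfolding has_repeated_diff_def using in_W[of a] in_W[of w] in_W[of a'] in_W[of w'] dots diff_eq
    by blast
  then show ?thesis
    using c_len window_has_repeated_diff_def by blast
qed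

lemma prod_list_perm_array_split:
  assumes "perm_array_split ns A k"
  shows "prod_list ns = order_of_split ns k ^ 2"
proof -
  obtain \<phi> where "bij_betw \<phi> (box (take k ns)) (box (drop k ns))"
    using assms unfolding perm_array_split_def by blast
  then have "prod_list (take k ns) = prod_list (drop k ns)"
    by (metis bij_betw_same_card card_box)
  then show ?thesis
    by (metis append_take_drop_id order_of_split_def power2_eq_square prod_list.append)
qed

lemma odd_sides_if_odd_order:
  assumes "perm_array_split ns A k" and "odd (order_of_split ns k)"
  shows "\<forall>i<length ns. odd (ns ! i)"
proof (intro allI impI)
  fix i assume "i < length ns"
  then have "ns ! i dvd prod_list ns"
    by (simp add: prod_list_dvd)
  moreover have "odd (prod_list ns)"
    using assms by (simp add: prod_list_perm_array_split)
  ultimately show "odd (ns ! i)"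
    using dvd_trans by blast
qed

lemma bij_betw_box_shift_collision:
  assumes bij: "bij_betw \<phi> (box ms) (box ns)"
    and i: "i < length ms" "2 \<le> ms ! i"
    and pos_ms: "\<forall>j<length ms. 0 < ms ! j" and pos_ns: "\<forall>j<length ns. 0 < ns ! j"
  shows "\<exists>x\<in>box ms. \<exists>x'\<in>box ms. x \<noteq> x' \<and>
    box_rep ns (diff_vec (\<phi> x) (\<phi> (box_shift ms i x))) =
    box_rep ns (diff_vec (\<phi> x') (\<phi> (box_shift ms i x')))"
proof -
  define \<sigma> where "\<sigma> = box_shift ms i"
  define h where "h x = box_rep ns (diff_vec (\<phi> x) (\<phi> (\<sigma> x)))" for x
  define zero where "zero = box_rep ns (replicate (length ns) 0)"
  have "h ` box ms \<subseteq> box ns - {zero}"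
  proof
    fix y assume "y \<in> h ` box ms"
    then obtain x where x: "x \<in> box ms" and y: "y = h x" by blast
    have \<sigma>x: "\<sigma> x \<in> box ms" "\<sigma> x \<noteq> x"
      using box_shift_in_box[OF x pos_ms] box_shift_neq[OF x i] by (simp_all add: \<sigma>_def)
    have \<phi>x: "\<phi> x \<in> box ns" and \<phi>\<sigma>x: "\<phi> (\<sigma> x) \<in> box ns"
      using bij_betwE[OF bij] x \<sigma>x by auto
    have "h x \<in> box ns"
      using \<phi>x \<phi>\<sigma>x pos_ns by (simp add: h_def box_rep_in_box length_box)
    moreover have "\<phi> (\<sigma> x) \<noteq> \<phi> x"
      using bij_betw_imp_inj_on[OF bij] x \<sigma>x by (metis inj_on_eq_iff)
    then have "h x \<noteq> zero"
      using box_rep_diff_vec_eq_zero_iff[OF \<phi>x \<phi>\<sigma>x] by (simp add: h_def zero_def)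
    ultimately show "y \<in> box ns - {zero}"
      using y by blast
  qed
  then have "card (h ` box ms) \<le> card (box ns - {zero})"
    by (simp add: card_mono finite_box)
  also have "\<dots> < card (box ns)"
    using pos_ns by (intro card_Diff1_less) (simp_all add: finite_box zero_def box_rep_in_box)
  also have "\<dots> = card (box ms)"
    using bij_betw_same_card[OF bij] by simp
  finally have "\<not> inj_on h (box ms)"
    using card_image by fastforce
  then show ?thesis
    unfolding inj_on_def h_def \<sigma>_def by blast
qed

lemma graph_in_perm_array_dots:
  assumes "bij_betw \<phi> (box (take k ns)) (box (drop k ns))"
    and "\<forall>a\<in>box ns. A a = 1 \<longleftrightarrow> \<phi> (take k a) = drop k a"
    and "k \<le> length ns" and x: "x \<in> box (take k ns)"
  shows "x @ \<phi> x \<in> {a \<in> box ns. A a = 1}"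
proof -
  have "x @ \<phi> x \<in> box ns"
    using append_in_box[OF x bij_betw_apply[OF assms(1) x]] by simp
  moreover have "length x = k"
    using length_box[OF x] assms(3) by simp
  ultimately show ?thesis
    using assms(2) by simp
qed

lemma perm_array_has_repeated_diff_mod:
  assumes split: "perm_array_split ns A k" and sides: "\<forall>i<length ns. 2 \<le> ns ! i"
  shows "has_repeated_diff_mod ns {a \<in> box ns. A a = 1}"
proof -
  define T where "T = box (take k ns)"
  obtain \<phi> where k: "0 < k" "k < length ns" and bij: "bij_betw \<phi> T (box (drop k ns))"
    and dot_iff: "\<forall>a\<in>box ns. A a = 1 \<longleftrightarrow> \<phi> (take k a) = drop k a"
    using split unfolding perm_array_split_def T_def by auto
  have pos: "0 < n" if "n \<in> set ns" for n
    using sides that by (metis in_set_conv_nth not_numeral_le_zero gr0I)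
  have pos_T: "\<forall>i<length (take k ns). 0 < take k ns ! i"
    by (metis nth_mem in_set_takeD pos)
  have pos_S: "\<forall>i<length (drop k ns). 0 < drop k ns ! i"
    by (metis nth_mem in_set_dropD pos)
  have side_0: "0 < length (take k ns)" "2 \<le> take k ns ! 0"
    using k by (auto intro: sides[rule_format])
  define \<sigma> where "\<sigma> = box_shift (take k ns) 0"
  define dot where "dot y = y @ \<phi> y" for y
  obtain x x' where x: "x \<in> T" and x': "x' \<in> T" and "x \<noteq> x'"
    and collision: "box_rep (drop k ns) (diff_vec (\<phi> x) (\<phi> (\<sigma> x))) =
                    box_rep (drop k ns) (diff_vec (\<phi> x') (\<phi> (\<sigma> x')))"
    using bij_betw_box_shift_collision[OF bij[unfolded T_def] side_0 pos_T pos_S]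
    unfolding \<sigma>_def T_def by blast
  have \<sigma>: "\<sigma> y \<in> T" "\<sigma> y \<noteq> y" if "y \<in> T" for y
    using that box_shift_in_box[OF _ pos_T] box_shift_neq[OF _ side_0]
    by (simp_all add: \<sigma>_def T_def)
  have len_T: "length y = k" if "y \<in> T" for y
    using that k by (simp add: T_def length_box)
  have dot: "dot y \<in> {a \<in> box ns. A a = 1}" if "y \<in> T" for y
    using graph_in_perm_array_dots[OF bij[unfolded T_def] dot_iff less_imp_le[OF k(2)]] that by (simp add: dot_def T_def)
  have dot_inj: "dot y = dot z \<Longrightarrow> y = z" if "y \<in> T" "z \<in> T" for y z
    using that len_T by (metis append_eq_append_conv dot_def)
  have diff_dot: "box_rep ns (diff_vec (dot y) (dot (\<sigma> y))) =
      box_rep (take k ns) ((replicate k 0)[0 := 1]) @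
      box_rep (drop k ns) (diff_vec (\<phi> y) (\<phi> (\<sigma> y)))" if "y \<in> T" for y
    using that len_T[OF that] len_T[OF \<sigma>(1)[OF that]] k
      box_rep_append[of "diff_vec y (\<sigma> y)" "take k ns" "drop k ns"]
      box_rep_diff_vec_box_shift[of y "take k ns" 0]
    by (simp add: dot_def diff_vec_append \<sigma>_def T_def)
  show ?thesis
    unfolding has_repeated_diff_mod_def
  proof (intro exI conjI)
    show "dot x \<noteq> dot (\<sigma> x)" "dot x' \<noteq> dot (\<sigma> x')" "(dot x, dot (\<sigma> x)) \<noteq> (dot x', dot (\<sigma> x'))"
      using dot_inj \<sigma> x x' \<open>x \<noteq> x'\<close> by fastforce+
    show "box_rep ns (diff_vec (dot x) (dot (\<sigma> x))) = box_rep ns (diff_vec (dot x') (dot (\<sigma> x')))"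
      using diff_dot x x' collision by simp
  qed (use dot \<sigma> x x' in auto)
qed

theorem mainTheorem7:
  fixes ns :: "nat list" and A :: "int list \<Rightarrow> nat" and k :: nat
  assumes "length ns \<ge> 2"
    and "\<forall>i<length ns. ns ! i \<ge> 2"
    and "perm_array_split ns A k"
    and "odd (order_of_split ns k)"
  shows "(\<exists>c. length c = length ns \<and> window_has_repeated_diff ns A c)
         \<and> \<not> periodic_costas ns A"
proof -
  \<comment> \<open>The hypothesis length ns \<ge> 2 is implied by perm_array_split ns A k.\<close>
  have "has_repeated_diff_mod ns {a \<in> box ns. A a = 1}"
    using perm_array_has_repeated_diff_mod[OF assms(3,2)] .
  moreover have "\<forall>i<length ns. odd (ns ! i)"
    using odd_sides_if_odd_order[OF assms(3,4)] .
  ultimately obtain c where "length c = length ns" and "window_has_repeated_diff ns A c"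
    using window_has_repeated_diff_if_mod by blast
  then show ?thesis
    unfolding periodic_costas_def by blast
qed

end
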